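(* The set consisting of the NOR gate and fanout gates (with any number of outputs) parsimoniously simulates, via planar simulations, each of the OR gate, the AND gate, and the crossover.
   Context: A gadget consists of a finite set of ports, equipped with a cyclic order, and a constraint, which is a set of subsets of the ports. A network of gadgets from $S$ is a finite undirected multigraph whose vertices are labeled by gadgets from $S$, each vertex's edge incidences being in bijection with the ports of its label. An assignment orients every edge; a vertex is satisfied if the set of its ports whose edges point into it belongs to its constraint. A simulation using gadgets from $S$ is a network of gadgets from $S$ that may additionally have dangling edges, each incident to only one vertex (equivalently, an extra outside-world vertex whose constraint contains every subset). It is planar if the graph including the outside world has a planar embedding respecting the port cyclic orders; the simulated gadget's ports are then the dangling edges in their order around the simulation. The simulated gadget's constraint consists of each set $D$ of dangling edges such that some assignment satisfying every non-outside-world vertex makes exactly the dangling edges in $D$ point into the simulation. A simulation is parsimonious if for each set in the simulated gadget's constraint there is exactly one such satisfying assignment realizing it; $S$ parsimoniously simulates $G$ if some parsimonious simulation using gadgets from $S$ has simulated gadget $G$. Gadgets: NOR gate: ports $a,b,c$, constraint $\{\emptyset,\{a,c\},\{b,c\},\{a,b,c\}\}$. $k$-way fanout gate: ports $a,c_1,\dots,c_k$, constraint $\{\{a\},\{c_1,\dots,c_k\}\}$. OR gate: ports $a,b,c$, constraint $\{\{c\},\{a\},\{b\},\{a,b\}\}$. AND gate: ports $a,b,c$, constraint $\{\{c\},\{a,c\},\{b,c\},\{a,b\}\}$. Crossover: ports $a_1,b_1,a_2,b_2$ in this cyclic order, constraint $\{\{a_1,b_1\},\{a_2,b_1\},\{a_1,b_2\},\{a_2,b_2\}\}$.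 *)

theory Defs
  imports Main
begin

text \<open>A gadget with k ports: the ports are 0,...,k-1, listed in their cyclic order.
  The constraint is a set of subsets of the ports.\<close>
record gadget =
  arity :: nat
  cons :: "nat set set"

definition NOR_gate :: gadget where
  "NOR_gate = \<lparr> arity = 3, cons = {{}, {0,2}, {1,2}, {0,1,2}} \<rparr>"

text \<open>k-way fanout: port a = 0, outputs c_1..c_k = 1..k.\<close>
definition fanout_gate :: "nat \<Rightarrow> gadget" where
  "fanout_gate k = \<lparr> arity = Suc k, cons = {{0}, {1..k}} \<rparr>"

definition OR_gate :: gadget where
  "OR_gate = \<lparr> arity = 3, cons = {{2}, {0}, {1}, {0,1}} \<rparr>"

definition AND_gate :: gadget where
  "AND_gate = \<lparr> arity = 3, cons = {{2}, {0,2}, {1,2}, {0,1}} \<rparr>"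

text \<open>Crossover: ports a1=0, b1=1, a2=2, b2=3 in this cyclic order.\<close>
definition crossover :: gadget where
  "crossover = \<lparr> arity = 4, cons = {{0,1}, {2,1}, {0,3}, {2,3}} \<rparr>"

text \<open>A dart (half-edge) is a pair (vertex, port). The multigraph is given by a
  fixed-point-free involution mate on the darts, pairing the two ends of each edge.
  Dangling edges are the edges with one end at Out.\<close>
datatype vtx = Out | In nat

record simulation =
  nverts :: nat
  lab :: "nat \<Rightarrow> gadget"
  nout :: nat
  mate :: "vtx \<times> nat \<Rightarrow> vtx \<times> nat"

fun ar :: "simulation \<Rightarrow> vtx \<Rightarrow> nat" where
  "ar s Out = nout s"
| "ar s (In v) = arity (lab s v)"

definition verts :: "simulation \<Rightarrow> vtx set" where
  "verts s = insert Out (In ` {..<nverts s})"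

definition darts :: "simulation \<Rightarrow> (vtx \<times> nat) set" where
  "darts s = {(x, i). x \<in> verts s \<and> i < ar s x}"

definition wf_sim :: "gadget set \<Rightarrow> simulation \<Rightarrow> bool" where
  "wf_sim S s \<longleftrightarrow>
     (\<forall>v < nverts s. lab s v \<in> S) \<and>
     (\<forall>d \<in> darts s. mate s d \<in> darts s \<and> mate s (mate s d) = d \<and> mate s d \<noteq> d) \<and>
     (\<forall>i < nout s. fst (mate s (Out, i)) \<noteq> Out)"

text \<open>An assignment is given by the set A of darts at which the edge points into the
  incident vertex; every edge is oriented in exactly one direction.\<close>
definition assignment :: "simulation \<Rightarrow> (vtx \<times> nat) set \<Rightarrow> bool" where
  "assignment s A \<longleftrightarrow> A \<subseteq> darts s \<and> (\<forall>d \<in> darts s. (d \<in> A) \<noteq> (mate s d \<in> A))"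

definition satisfying :: "simulation \<Rightarrow> (vtx \<times> nat) set \<Rightarrow> bool" where
  "satisfying s A \<longleftrightarrow> assignment s A \<and>
     (\<forall>v < nverts s. {i. (In v, i) \<in> A} \<in> cons (lab s v))"

text \<open>Dangling edges pointing into the simulation (i.e. out of the outside world).\<close>
definition into_sim :: "simulation \<Rightarrow> (vtx \<times> nat) set \<Rightarrow> nat set" where
  "into_sim s A = {i. i < nout s \<and> (Out, i) \<notin> A}"

definition sim_cons :: "simulation \<Rightarrow> nat set set" where
  "sim_cons s = {D. \<exists>A. satisfying s A \<and> D = into_sim s A}"

definition parsimonious :: "simulation \<Rightarrow> bool" where
  "parsimonious s \<longleftrightarrow> (\<forall>D \<in> sim_cons s. \<exists>!A. satisfying s A \<and> into_sim s A = D)"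

text \<open>The simulated gadget has ports 0..nout-1 (the dangling edges in their cyclic order
  around the outside world vertex); it equals G up to a cyclic relabelling of ports.\<close>
definition simulates :: "simulation \<Rightarrow> gadget \<Rightarrow> bool" where
  "simulates s G \<longleftrightarrow> arity G = nout s \<and>
     (\<exists>r. cons G = (\<lambda>D. (\<lambda>i. (i + r) mod nout s) ` D) ` sim_cons s)"

text \<open>The port cyclic orders give a rotation system; faces are the orbits of
  rotation composed with mate. Planarity respecting the rotation system is the
  Euler condition V - E + F = 2C (each component has genus 0); an isolated vertex
  counts as one face.\<close>
definition rot :: "simulation \<Rightarrow> vtx \<times> nat \<Rightarrow> vtx \<times> nat" where
  "rot s d = (fst d, Suc (snd d) mod ar s (fst d))"

definition face_step :: "simulation \<Rightarrow> vtx \<times> nat \<Rightarrow> vtx \<times> nat" where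
  "face_step s d = rot s (mate s d)"

definition faces :: "simulation \<Rightarrow> (vtx \<times> nat) set set" where
  "faces s = darts s // {(d, e). d \<in> darts s \<and> e \<in> darts s \<and> (\<exists>k. (face_step s ^^ k) d = e)}"

definition adj :: "simulation \<Rightarrow> (vtx \<times> vtx) set" where
  "adj s = {(x, y). \<exists>i j. (x, i) \<in> darts s \<and> mate s (x, i) = (y, j)}"

definition components :: "simulation \<Rightarrow> vtx set set" where
  "components s = verts s // ((adj s)\<^sup>*)"

definition planar :: "simulation \<Rightarrow> bool" where
  "planar s \<longleftrightarrow>
     int (card (verts s)) - int (card (darts s) div 2)
       + int (card (faces s) + card {x \<in> verts s. ar s x = 0})
     = 2 * int (card (components s))"

definition planar_parsimoniously_simulates :: "gadget set \<Rightarrow> gadget \<Rightarrow> bool" where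
  "planar_parsimoniously_simulates S G \<longleftrightarrow>
     (\<exists>s. wf_sim S s \<and> planar s \<and> parsimonious s \<and> simulates s G)"

end

theory Submission
  imports Defs
begin

text \<open>Read every edge as a wire that carries 1 when it is oriented in the direction of signal
  flow. Then a NOR gadget outputs the NOR of its two inputs and a fanout gadget copies its input to
  all of its outputs, so OR, AND and the crossover are realised by the circuits \<open>\<not> NOR a b\<close>,
  \<open>NOR (\<not> a) (\<not> b)\<close> and the classical crossover made of three XNORs: \<open>c = (a \<longleftrightarrow> b)\<close> and the
  outputs \<open>(c \<longleftrightarrow> b) = a\<close> and \<open>(c \<longleftrightarrow> a) = b\<close>. Here \<open>\<not> x = NOR x x\<close>,
  \<open>(x \<longleftrightarrow> y) = NOR (NOR x n) (NOR y n)\<close> with \<open>n = NOR x y\<close>, and fanouts duplicate the wires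
  that are used more than once. Each circuit comes with a rotation system whose face cycles satisfy
  Euler's formula, and its satisfying assignments are exactly its four evaluations, one for each
  value of the two inputs; since they differ on the dangling edges, the simulation is
  parsimonious.\<close>

type_synonym dart = "vtx \<times> nat"

section \<open>Local constraints of NOR and fanout gadgets\<close>

lemma arity_NOR: "arity NOR_gate = 3"
  by (simp add: NOR_gate_def)

lemma arity_fanout: "arity (fanout_gate k) = Suc k"
  by (simp add: fanout_gate_def)

lemma NOR_cons_iff:
  "{i. i < arity NOR_gate \<and> p i} \<in> cons NOR_gate \<longleftrightarrow> (p 2 \<longleftrightarrow> p 0 \<or> p 1)"
  (is "?P \<in> _ \<longleftrightarrow> _")
proof -
  have ports: "i \<in> ?P \<longleftrightarrow> (i = 0 \<or> i = 1 \<or> i = 2) \<and> p i" for i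
  proof -
    have "i < 3 \<longleftrightarrow> i = 0 \<or> i = 1 \<or> i = 2" by arith
    then show ?thesis by (simp add: NOR_gate_def)
  qed
  have "?P \<in> {{}, {0, 2}, {1, 2}, {0, 1, 2}} \<longleftrightarrow> (p 2 \<longleftrightarrow> p 0 \<or> p 1)"
  proof
    assume "?P \<in> {{}, {0, 2}, {1, 2}, {0, 1, 2}}"
    then have "?P = {} \<or> ?P = {0, 2} \<or> ?P = {1, 2} \<or> ?P = {0, 1, 2}" by simp
    moreover have "p 0 \<longleftrightarrow> 0 \<in> ?P" "p 1 \<longleftrightarrow> 1 \<in> ?P" "p 2 \<longleftrightarrow> 2 \<in> ?P"
      using ports by simp_all
    ultimately show "p 2 \<longleftrightarrow> p 0 \<or> p 1" by (elim disjE) simp_all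
  next
    assume NOR: "p 2 \<longleftrightarrow> p 0 \<or> p 1"
    show "?P \<in> {{}, {0, 2}, {1, 2}, {0, 1, 2}}"
    proof (cases "p 0"; cases "p 1")
      assume "p 0" "p 1" then have "?P = {0, 1, 2}" using NOR unfolding set_eq_iff ports by auto
      then show ?thesis by simp
    next
      assume "p 0" "\<not> p 1" then have "?P = {0, 2}" using NOR unfolding set_eq_iff ports by auto
      then show ?thesis by simp
    next
      assume "\<not> p 0" "p 1" then have "?P = {1, 2}" using NOR unfolding set_eq_iff ports by auto
      then show ?thesis by simp
    next
      assume "\<not> p 0" "\<not> p 1" then have "?P = {}" using NOR unfolding set_eq_iff ports by (metis empty_iff)
      then show ?thesis by simp
    qed
  qed
  then show ?thesis by (simp add: NOR_gate_def)
qed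

lemma fanout_cons_iff:
  "{i. i < arity (fanout_gate k) \<and> p i} \<in> cons (fanout_gate k) \<longleftrightarrow> (\<forall>j \<in> {1..k}. p j \<longleftrightarrow> \<not> p 0)"
proof -
  have ports: "{i. i < arity (fanout_gate k) \<and> p i} = {j. j \<le> k \<and> p j}"
    by (auto simp: fanout_gate_def less_Suc_eq_le)
  have input: "{j. j \<le> k \<and> p j} = {0} \<longleftrightarrow> p 0 \<and> (\<forall>j \<in> {1..k}. \<not> p j)"
  proof
    assume "{j. j \<le> k \<and> p j} = {0}"
    then have eq: "j \<le> k \<and> p j \<longleftrightarrow> j = 0" for j by blast
    show "p 0 \<and> (\<forall>j \<in> {1..k}. \<not> p j)"
    proof (intro conjI ballI)
      show "p 0" using eq[of 0] by simp
      show "\<not> p j" if "j \<in> {1..k}" for j using that eq[of j] by simp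
    qed
  next
    assume "p 0 \<and> (\<forall>j \<in> {1..k}. \<not> p j)"
    then have "j \<le> k \<and> p j \<longleftrightarrow> j = 0" for j by (cases j) auto
    then show "{j. j \<le> k \<and> p j} = {0}" by blast
  qed
  have outputs: "{j. j \<le> k \<and> p j} = {1..k} \<longleftrightarrow> \<not> p 0 \<and> (\<forall>j \<in> {1..k}. p j)"
  proof
    assume "{j. j \<le> k \<and> p j} = {1..k}"
    then have eq: "j \<le> k \<and> p j \<longleftrightarrow> j \<in> {1..k}" for j by blast
    show "\<not> p 0 \<and> (\<forall>j \<in> {1..k}. p j)"
    proof (intro conjI ballI)
      show "\<not> p 0" using eq[of 0] by simp
      show "p j" if "j \<in> {1..k}" for j using that eq[of j] by simp
    qed
  next
    assume "\<not> p 0 \<and> (\<forall>j \<in> {1..k}. p j)"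
    then have "j \<le> k \<and> p j \<longleftrightarrow> j \<in> {1..k}" for j by (cases j) auto
    then show "{j. j \<le> k \<and> p j} = {1..k}" by blast
  qed
  have "cons (fanout_gate k) = {{0}, {1..k}}" by (simp add: fanout_gate_def)
  then have "{j. j \<le> k \<and> p j} \<in> cons (fanout_gate k) \<longleftrightarrow>
      p 0 \<and> (\<forall>j \<in> {1..k}. \<not> p j) \<or> \<not> p 0 \<and> (\<forall>j \<in> {1..k}. p j)"
    by (simp only: insert_iff empty_iff input outputs simp_thms)
  then show ?thesis unfolding ports by blast
qed

fun edge_mate :: "(dart \<times> dart) list \<Rightarrow> dart \<Rightarrow> dart" where
  "edge_mate [] x = x"
| "edge_mate ((d, e) # es) x = (if x = d then e else if x = e then d else edge_mate es x)"

definition circuit :: "nat \<Rightarrow> (nat \<Rightarrow> gadget) \<Rightarrow> nat \<Rightarrow> (dart \<times> dart) list \<Rightarrow> simulation" where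
  "circuit n g k es = \<lparr>nverts = n, lab = g, nout = k, mate = edge_mate es\<rparr>"

lemma circuit_eqD:
  assumes "s = circuit n g k es"
  shows "nverts s = n" and "lab s = g" and "nout s = k" and "mate s = edge_mate es"
  using assms by (simp_all add: circuit_def)

definition edge_ends :: "(dart \<times> dart) list \<Rightarrow> dart list" where
  "edge_ends es = concat (map (\<lambda>(d, e). [d, e]) es)"

definition edge_list :: "simulation \<Rightarrow> (dart \<times> dart) list \<Rightarrow> bool" where
  "edge_list s es \<longleftrightarrow> distinct (edge_ends es) \<and> set (edge_ends es) = darts s"

lemma set_edge_ends: "set (edge_ends es) = fst ` set es \<union> snd ` set es"
  by (induction es) (auto simp: edge_ends_def)

lemma edge_mate_eq:
  assumes "distinct (edge_ends es)" and "(d, e) \<in> set es"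
  shows "edge_mate es d = e \<and> edge_mate es e = d"
  using assms
proof (induction es)
  case Nil
  then show ?case by simp
next
  case (Cons p es)
  obtain a b where p: "p = (a, b)" by (cases p)
  have dist: "distinct (edge_ends es)"
    and ab: "a \<noteq> b" "a \<notin> set (edge_ends es)" "b \<notin> set (edge_ends es)"
    using Cons.prems(1) by (simp_all add: p edge_ends_def)
  show ?case
  proof (cases "(d, e) = (a, b)")
    case True
    then show ?thesis using ab(1) p by auto
  next
    case False
    then have de: "(d, e) \<in> set es" using Cons.prems(2) p by auto
    then have "d \<in> set (edge_ends es)" "e \<in> set (edge_ends es)" by (force simp: set_edge_ends)+
    then show ?thesis using Cons.IH[OF dist de] ab by (auto simp: p)
  qed
qed

lemma edge_list_darts_cases:
  assumes "edge_list s es" and "x \<in> darts s"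
  obtains e where "(x, e) \<in> set es" | d where "(d, x) \<in> set es"
proof -
  have "x \<in> fst ` set es \<union> snd ` set es"
    using assms by (simp add: edge_list_def set_edge_ends)
  then show ?thesis using that by (auto simp: image_iff)
qed

lemma mate_circuit:
  assumes s: "s = circuit n g k es" and es: "edge_list s es" and de: "(d, e) \<in> set es"
  shows "mate s d = e" and "mate s e = d" and "d \<noteq> e" and "d \<in> darts s" and "e \<in> darts s"
proof -
  have dist: "distinct (edge_ends es)" and ends: "set (edge_ends es) = darts s"
    using es by (simp_all add: edge_list_def)
  show "mate s d = e" and "mate s e = d"
    using edge_mate_eq[OF dist de] by (simp_all add: circuit_eqD[OF s])
  show "d \<noteq> e"
    using dist de by (induction es) (auto simp: edge_ends_def set_edge_ends)
  show "d \<in> darts s" and "e \<in> darts s"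
    using de ends by (force simp: set_edge_ends)+
qed

lemma wf_sim_circuit:
  assumes s: "s = circuit n g k es" and es: "edge_list s es"
    and no_loop: "\<forall>(d, e) \<in> set es. fst d \<noteq> Out \<or> fst e \<noteq> Out"
    and gates: "\<forall>v < n. g v \<in> S"
  shows "wf_sim S s"
proof -
  have mate: "mate s x \<in> darts s \<and> mate s (mate s x) = x \<and> mate s x \<noteq> x" if "x \<in> darts s" for x
    using es that
  proof (cases rule: edge_list_darts_cases)
    case (1 e)
    then show ?thesis using mate_circuit[OF s es 1] by simp
  next
    case (2 d)
    then show ?thesis using mate_circuit[OF s es 2] by simp
  qed
  have "fst (mate s (Out, i)) \<noteq> Out" if "i < k" for i
  proof -
    have "(Out, i) \<in> darts s" using that by (simp add: darts_def verts_def circuit_eqD[OF s])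
    with es show ?thesis
    proof (cases rule: edge_list_darts_cases)
      case (1 e)
      then show ?thesis using mate_circuit[OF s es 1] no_loop by force
    next
      case (2 d)
      then show ?thesis using mate_circuit[OF s es 2] no_loop by force
    qed
  qed
  then show ?thesis using gates mate unfolding wf_sim_def by (simp add: circuit_eqD[OF s])
qed

section \<open>Satisfying assignments and parsimony\<close>

lemma assignment_circuit_iff:
  assumes s: "s = circuit n g k es" and es: "edge_list s es"
  shows "assignment s A \<longleftrightarrow> A \<subseteq> darts s \<and> (\<forall>(d, e) \<in> set es. e \<in> A \<longleftrightarrow> d \<notin> A)"
proof -
  have "(\<forall>x \<in> darts s. (x \<in> A) \<noteq> (mate s x \<in> A)) \<longleftrightarrow> (\<forall>(d, e) \<in> set es. e \<in> A \<longleftrightarrow> d \<notin> A)"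
  proof
    assume "\<forall>x \<in> darts s. (x \<in> A) \<noteq> (mate s x \<in> A)"
    then show "\<forall>(d, e) \<in> set es. e \<in> A \<longleftrightarrow> d \<notin> A"
      using mate_circuit[OF s es] by fastforce
  next
    assume edges: "\<forall>(d, e) \<in> set es. e \<in> A \<longleftrightarrow> d \<notin> A"
    show "\<forall>x \<in> darts s. (x \<in> A) \<noteq> (mate s x \<in> A)"
    proof
      fix x assume "x \<in> darts s"
      with es show "(x \<in> A) \<noteq> (mate s x \<in> A)"
      proof (cases rule: edge_list_darts_cases)
        case (1 e)
        then show ?thesis using edges mate_circuit[OF s es 1] by auto
      next
        case (2 d)
        then show ?thesis using edges mate_circuit[OF s es 2] by auto
      qed
    qed
  qed
  then show ?thesis by (simp add: assignment_def)
qed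

lemma satisfying_iff_ports:
  "satisfying s A \<longleftrightarrow> assignment s A \<and>
     (\<forall>v < nverts s. {i. i < arity (lab s v) \<and> (In v, i) \<in> A} \<in> cons (lab s v))"
proof -
  have "{i. i < arity (lab s v) \<and> (In v, i) \<in> A} = {i. (In v, i) \<in> A}"
    if "A \<subseteq> darts s" "v < nverts s" for v
    using that by (auto simp: darts_def)
  then show ?thesis unfolding satisfying_def assignment_def by auto
qed

lemma satisfying_circuit_iff:
  assumes "s = circuit n g k es" and "edge_list s es"
  shows "satisfying s A \<longleftrightarrow>
    A \<subseteq> darts s \<and> (\<forall>(d, e) \<in> set es. e \<in> A \<longleftrightarrow> d \<notin> A) \<and>
    (\<forall>v < n. {i. i < arity (g v) \<and> (In v, i) \<in> A} \<in> cons (g v))"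
  unfolding satisfying_iff_ports assignment_circuit_iff[OF assms] by (simp add: circuit_eqD[OF assms(1)])

lemma satisfying_iff_listed:
  assumes sound: "\<forall>C \<in> set Cs. satisfying s C"
    and determined: "\<And>A. satisfying s A \<Longrightarrow> \<exists>C \<in> set Cs. \<forall>d \<in> darts s. d \<in> A \<longleftrightarrow> d \<in> C"
  shows "satisfying s A \<longleftrightarrow> A \<in> set Cs"
proof
  assume sat: "satisfying s A"
  then obtain C where C: "C \<in> set Cs" "\<forall>d \<in> darts s. d \<in> A \<longleftrightarrow> d \<in> C"
    using determined by blast
  have "A \<subseteq> darts s" "C \<subseteq> darts s"
    using sat sound C(1) by (auto simp: satisfying_def assignment_def)
  with C(2) have "A = C" by blast
  with C(1) show "A \<in> set Cs" by simp
qed (use sound in blast)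

lemma into_sim_eq: "into_sim s A = set (filter (\<lambda>i. (Out, i) \<notin> A) [0..<nout s])"
  by (auto simp: into_sim_def)

lemma sim_cons_listed:
  assumes "\<And>A. satisfying s A \<longleftrightarrow> A \<in> set Cs"
  shows "sim_cons s = into_sim s ` set Cs"
  using assms unfolding sim_cons_def by auto

lemma parsimonious_listed:
  assumes listed: "\<And>A. satisfying s A \<longleftrightarrow> A \<in> set Cs"
    and distinct: "distinct (map (\<lambda>C. filter (\<lambda>i. (Out, i) \<notin> C) [0..<nout s]) Cs)"
  shows "parsimonious s"
proof -
  have "A = B" if "A \<in> set Cs" "B \<in> set Cs" "into_sim s A = into_sim s B" for A B
  proof -
    have "filter (\<lambda>i. (Out, i) \<notin> A) [0..<nout s] = filter (\<lambda>i. (Out, i) \<notin> B) [0..<nout s]"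
      using that(3) unfolding into_sim_eq
      by (intro sorted_distinct_set_unique) (simp_all add: sorted_wrt_filter)
    then show ?thesis using distinct that(1,2) by (metis (no_types, lifting) distinct_map inj_onD)
  qed
  then show ?thesis unfolding parsimonious_def sim_cons_def listed by blast
qed

lemma simulates_if_sim_cons:
  assumes "arity G = nout s" and "cons G = sim_cons s"
  shows "simulates s G"
proof -
  have "(\<lambda>i. (i + 0) mod nout s) ` D = D" if "D \<in> sim_cons s" for D
  proof -
    have "D \<subseteq> {..<nout s}" using that by (auto simp: sim_cons_def into_sim_def)
    then have "(\<lambda>i. (i + 0) mod nout s) ` D = id ` D" by (intro image_cong) auto
    then show ?thesis by simp
  qed
  then have "(\<lambda>D. (\<lambda>i. (i + 0) mod nout s) ` D) ` sim_cons s = sim_cons s" by simp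
  then show ?thesis using assms unfolding simulates_def by metis
qed

section \<open>Planarity\<close>

lemma orbit_nth:
  assumes "l \<noteq> []" "\<forall>i<length l. f (l!i) = l!(Suc i mod length l)" "i < length l"
  shows "(f ^^ k) (l!i) = l!((i + k) mod length l)"
proof (induction k)
  case 0 then show ?case using assms(3) by simp
next
  case (Suc k)
  have "(f ^^ Suc k) (l!i) = f (l!((i + k) mod length l))" using Suc by simp
  also have "\<dots> = l!(Suc ((i + k) mod length l) mod length l)"
    using assms(1,2) by simp
  also have "\<dots> = l!((i + Suc k) mod length l)" by (simp add: mod_Suc_eq)
  finally show ?case .
qed

lemma orbit_eq_set:
  assumes "l \<noteq> []" "\<forall>i<length l. f (l!i) = l!(Suc i mod length l)" "d \<in> set l"
  shows "{e. \<exists>k. (f ^^ k) d = e} = set l"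
proof -
  obtain i where i: "i < length l" "d = l!i" using assms(3) by (metis in_set_conv_nth)
  show ?thesis
  proof (intro set_eqI iffI)
    fix e assume "e \<in> {e. \<exists>k. (f ^^ k) d = e}"
    then obtain k where "(f ^^ k) d = e" by blast
    then have "e = l!((i + k) mod length l)" using orbit_nth[OF assms(1,2) i(1)] i(2) by simp
    then show "e \<in> set l" using assms(1) by simp
  next
    fix e assume "e \<in> set l"
    then obtain j where j: "j < length l" "e = l!j" by (metis in_set_conv_nth)
    have "(f ^^ (j + length l - i)) d = l!((i + (j + length l - i)) mod length l)"
      using orbit_nth[OF assms(1,2) i(1)] i(2) by simp
    also have "(i + (j + length l - i)) mod length l = j" using i(1) j(1) by simp
    finally show "e \<in> {e. \<exists>k. (f ^^ k) d = e}" using j(2) by blast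
  qed
qed

lemma cyclic_zip_rotate1:
  assumes "\<forall>(d, e) \<in> set (zip l (rotate1 l)). f d = e"
  shows "\<forall>i<length l. f (l!i) = l!(Suc i mod length l)"
proof (intro allI impI)
  fix i assume i: "i < length l"
  then have "(l!i, rotate1 l ! i) \<in> set (zip l (rotate1 l))"
    by (metis in_set_zip fst_conv snd_conv length_rotate1)
  then have "f (l!i) = rotate1 l ! i" using assms by fastforce
  then show "f (l!i) = l!(Suc i mod length l)" using i by (simp add: nth_rotate1)
qed

definition face_cycles :: "simulation \<Rightarrow> dart list list \<Rightarrow> bool" where
  "face_cycles s L \<longleftrightarrow> distinct (concat L) \<and> set (concat L) = darts s \<and>
     (\<forall>l \<in> set L. l \<noteq> [] \<and> (\<forall>(d, e) \<in> set (zip l (rotate1 l)). face_step s d = e))"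

lemma faces_eq_cycles:
  assumes "face_cycles s L"
  shows "faces s = set ` set L"
proof -
  have D: "darts s = set (concat L)" using assms unfolding face_cycles_def by simp
  have cyc: "l \<noteq> [] \<and> (\<forall>i<length l. face_step s (l!i) = l!(Suc i mod length l))"
    if "l \<in> set L" for l
  proof -
    from assms that have "l \<noteq> []" and "\<forall>(d, e) \<in> set (zip l (rotate1 l)). face_step s d = e"
      unfolding face_cycles_def by auto
    then show ?thesis using cyclic_zip_rotate1 by blast
  qed
  define R where "R = {(d, e). d \<in> darts s \<and> e \<in> darts s \<and> (\<exists>k. (face_step s ^^ k) d = e)}"
  have orbit: "R `` {d} = set l" if "l \<in> set L" "d \<in> set l" for l d
  proof -
    have "set l \<subseteq> darts s" and "d \<in> darts s" using that D by auto
    then show ?thesis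
      using orbit_eq_set[of l "face_step s" d] cyc[OF that(1)] that(2) unfolding R_def by auto
  qed
  have "faces s = (\<Union>d\<in>darts s. {R `` {d}})" unfolding faces_def quotient_def R_def by simp
  also have "\<dots> = set ` set L"
  proof (intro set_eqI iffI)
    fix X assume "X \<in> (\<Union>d\<in>darts s. {R `` {d}})"
    then obtain d where d: "d \<in> darts s" "X = R `` {d}" by blast
    then obtain l where "l \<in> set L" "d \<in> set l" using D by auto
    then show "X \<in> set ` set L" using orbit d by auto
  next
    fix X assume "X \<in> set ` set L"
    then obtain l where l: "l \<in> set L" "X = set l" by blast
    have "l \<noteq> []" using cyc[OF l(1)] by blast
    then obtain d where dl: "d \<in> set l" by (cases l) auto
    then have "d \<in> darts s" using l D by auto
    moreover have "X = R `` {d}" using orbit l dl by auto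
    ultimately show "X \<in> (\<Union>d\<in>darts s. {R `` {d}})" by blast
  qed
  finally show ?thesis .
qed

lemma card_faces_eq:
  assumes "face_cycles s L"
  shows "card (faces s) = length L"
proof -
  have ne: "[] \<notin> set L" using assms unfolding face_cycles_def by auto
  have dc: "distinct (removeAll [] L)"
    "\<forall>ys zs. ys \<in> set L \<and> zs \<in> set L \<and> ys \<noteq> zs \<longrightarrow> set ys \<inter> set zs = {}"
    using assms unfolding face_cycles_def distinct_concat_iff by auto
  have "distinct L" using dc(1) ne by (simp add: removeAll_id)
  moreover have "inj_on set (set L)"
  proof (rule inj_onI)
    fix x y assume xy: "x \<in> set L" "y \<in> set L" "set x = set y"
    show "x = y"
    proof (rule ccontr)
      assume "x \<noteq> y"
      then have "set x \<inter> set y = {}" using dc xy by blast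
      then show False using xy ne by (cases x) auto
    qed
  qed
  ultimately show ?thesis using faces_eq_cycles[OF assms] by (simp add: card_image distinct_card)
qed

fun reaches_all :: "simulation \<Rightarrow> vtx set \<Rightarrow> dart list \<Rightarrow> bool" where
  "reaches_all s R [] \<longleftrightarrow> verts s \<subseteq> R"
| "reaches_all s R (d # ds) \<longleftrightarrow> fst d \<in> R \<and> d \<in> darts s \<and> reaches_all s (insert (fst (mate s d)) R) ds"

lemma reaches_all_connected:
  "reaches_all s R ds \<Longrightarrow> R \<subseteq> (adj s)\<^sup>* `` {Out} \<Longrightarrow> verts s \<subseteq> (adj s)\<^sup>* `` {Out}"
proof (induction ds arbitrary: R)
  case Nil then show ?case by auto
next
  case (Cons d ds)
  obtain x i where d: "d = (x, i)" by fastforce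
  obtain y j where m: "mate s d = (y, j)" by fastforce
  have "(x, y) \<in> adj s" using Cons.prems d m unfolding adj_def by auto
  moreover have "(Out, x) \<in> (adj s)\<^sup>*" using Cons.prems d by auto
  ultimately have "(Out, y) \<in> (adj s)\<^sup>*" by (meson rtrancl_into_rtrancl)
  then have reached: "insert (fst (mate s d)) R \<subseteq> (adj s)\<^sup>* `` {Out}" using Cons.prems m by auto
  have "reaches_all s (insert (fst (mate s d)) R) ds" using Cons.prems(1) by simp
  then show ?case using reached by (rule Cons.IH)
qed

lemma sym_adj:
  assumes "wf_sim S s"
  shows "sym (adj s)"
proof (rule symI)
  fix x y assume "(x, y) \<in> adj s"
  then obtain i j where "(x, i) \<in> darts s" "mate s (x, i) = (y, j)" unfolding adj_def by blast
  then have "(y, j) \<in> darts s" "mate s (y, j) = (x, i)" using assms unfolding wf_sim_def by metis+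
  then show "(y, x) \<in> adj s" unfolding adj_def by blast
qed

lemma card_components_eq_1:
  assumes wf: "wf_sim S s" and reach: "reaches_all s {Out} ds"
  shows "card (components s) = 1"
proof -
  have reached: "verts s \<subseteq> (adj s)\<^sup>* `` {Out}" using reaches_all_connected[OF reach] by auto
  have adj_verts: "y \<in> verts s" if "(x, y) \<in> adj s" for x y
    using wf that unfolding adj_def darts_def wf_sim_def by fastforce
  have stay: "y \<in> verts s" if "(x, y) \<in> (adj s)\<^sup>*" "x \<in> verts s" for x y
    using that by (induction rule: rtrancl_induct) (auto dest: adj_verts)
  have "(adj s)\<^sup>* `` {x} = verts s" if "x \<in> verts s" for x
  proof (intro set_eqI iffI)
    fix y assume "y \<in> (adj s)\<^sup>* `` {x}" then show "y \<in> verts s" using stay that by auto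
  next
    fix y assume "y \<in> verts s"
    then have "(x, Out) \<in> (adj s)\<^sup>*" "(Out, y) \<in> (adj s)\<^sup>*"
      using reached that sym_adj[OF wf] by (auto intro: symD[OF sym_rtrancl])
    then show "y \<in> (adj s)\<^sup>* `` {x}" by (simp add: rtrancl_trans)
  qed
  moreover have "Out \<in> verts s" by (simp add: verts_def)
  ultimately have "components s = {verts s}" unfolding components_def quotient_def by auto
  then show ?thesis by simp
qed

lemma card_verts: "card (verts s) = Suc (nverts s)"
proof -
  have "card (In ` {..<nverts s}) = nverts s" by (simp add: card_image inj_on_def)
  then show ?thesis by (simp add: verts_def image_iff)
qed

lemma planar_if_euler:
  assumes wf: "wf_sim S s" and faces: "face_cycles s L" and reach: "reaches_all s {Out} ds"
    and no_isolated: "\<forall>x \<in> verts s. ar s x \<noteq> 0"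
    and euler: "Suc (nverts s) + length L = length (concat L) div 2 + 2"
  shows "planar s"
proof -
  have "card (darts s) = length (concat L)"
    using faces unfolding face_cycles_def by (metis distinct_card)
  moreover have isolated: "{x \<in> verts s. ar s x = 0} = {}" using no_isolated by blast
  ultimately show ?thesis
    using euler card_faces_eq[OF faces] card_components_eq_1[OF wf reach]
    unfolding planar_def card_verts isolated by simp
qed

lemma planar_parsimoniously_simulates_if_listed:
  assumes "wf_sim S s" and "planar s"
    and listed: "\<And>A. satisfying s A \<longleftrightarrow> A \<in> set Cs"
    and "distinct (map (\<lambda>C. filter (\<lambda>i. (Out, i) \<notin> C) [0..<nout s]) Cs)"
    and "arity G = nout s" and "cons G = into_sim s ` set Cs"
  shows "planar_parsimoniously_simulates S G"
  using assms parsimonious_listed[OF listed] simulates_if_sim_cons sim_cons_listed[OF listed]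
  unfolding planar_parsimoniously_simulates_def by metis

lemma verts_eq_list: "verts s = set (Out # map In [0..<nverts s])"
  by (auto simp: verts_def)

lemma darts_eq_list:
  "darts s = set (concat (map (\<lambda>x. map (Pair x) [0..<ar s x]) (Out # map In [0..<nverts s])))"
  by (auto simp: darts_def verts_def)

lemma upt_arity_NOR: "[0..<arity NOR_gate] = [0, 1, 2]"
  by (simp add: NOR_gate_def upt_rec)

lemma upt_arity_fanout: "[0..<arity (fanout_gate k)] = [0..<Suc k]"
  by (simp add: fanout_gate_def)

lemma all_less_iff_upt: "(\<forall>v < n. P v) \<longleftrightarrow> (\<forall>v \<in> set [0..<n]. P v)"
  by auto

text \<open>\<open>upt_conv_Cons\<close> enumerates ports as \<open>Suc (Suc 0)\<close>, which has to be folded back into the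
  numeral \<open>2\<close> used in the edge lists.\<close>

lemmas circuit_simps = edge_list_def edge_ends_def darts_eq_list verts_eq_list
  upt_conv_Cons upt_arity_NOR upt_arity_fanout numeral_2_eq_2[symmetric]

lemmas embedding_simps = face_step_def rot_def arity_NOR arity_fanout set_eq_subset circuit_simps

text \<open>\<open>arity_NOR\<close> and \<open>arity_fanout\<close> must not be used here: \<open>NOR_cons_iff\<close> and
  \<open>fanout_cons_iff\<close> match on the unevaluated arity.\<close>

lemmas gate_simps = all_less_iff_upt atLeastAtMost_upt NOR_cons_iff fanout_cons_iff circuit_simps

section \<open>The three circuits\<close>

definition NOR_fanout_gates :: "gadget set" where
  "NOR_fanout_gates = insert NOR_gate {fanout_gate k | k. k \<ge> 1}"

text \<open>Each edge is listed from the port that drives the wire to the port that reads it, and the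
  edges are listed in an order in which the circuit can be evaluated. Hence the rules
  \<open>e \<in> A \<longleftrightarrow> d \<notin> A\<close> of a satisfying assignment, together with the gate constraints, rewrite the
  membership of every dart into a function of the two input darts, and the tails of the edges
  form a walk that reaches every vertex. The inputs are the dangling edges \<open>(Out, 0)\<close> and
  \<open>(Out, 1)\<close>.\<close>

definition OR_edges :: "(dart \<times> dart) list" where
  "OR_edges = [
    ((Out, 0), (In 0, 1)), ((Out, 1), (In 0, 0)), ((In 0, 2), (In 2, 0)), ((In 2, 1), (In 1, 1)),
    ((In 2, 2), (In 1, 0)), ((In 1, 2), (Out, 2))]"

definition OR_circuit :: simulation where
  "OR_circuit = circuit 3 (\<lambda>v. if v < 2 then NOR_gate else fanout_gate 2) 3 OR_edges"

lemmas OR_simps = circuit_eqD[OF OR_circuit_def] OR_edges_def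

lemma OR_edge_list: "edge_list OR_circuit OR_edges"
  by (simp add: OR_simps circuit_simps set_eq_subset)

lemma OR_wf: "wf_sim NOR_fanout_gates OR_circuit"
  by (rule wf_sim_circuit[OF OR_circuit_def OR_edge_list])
    (auto simp: OR_edges_def NOR_fanout_gates_def)

lemma OR_planar: "planar OR_circuit"
proof (rule planar_if_euler[OF OR_wf])
  show "face_cycles OR_circuit [
      [(Out, 0), (In 0, 2), (In 2, 1), (In 1, 2)], [(Out, 1), (In 0, 1)],
      [(Out, 2), (In 1, 0), (In 2, 0), (In 0, 0)], [(In 1, 1), (In 2, 2)]]"
    by (simp add: face_cycles_def) (simp add: OR_simps embedding_simps)
  show "reaches_all OR_circuit {Out} (map fst OR_edges)"
    by (simp add: OR_simps circuit_simps)
qed (simp_all add: OR_simps embedding_simps)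

definition OR_assignments :: "dart set list" where
  "OR_assignments = [
    {(Out, 0), (Out, 1), (In 1, 0), (In 1, 1), (In 1, 2), (In 2, 0)},
    {(Out, 0), (Out, 2), (In 0, 0), (In 0, 2), (In 2, 1), (In 2, 2)},
    {(Out, 1), (Out, 2), (In 0, 1), (In 0, 2), (In 2, 1), (In 2, 2)},
    {(Out, 2), (In 0, 0), (In 0, 1), (In 0, 2), (In 2, 1), (In 2, 2)}]"

lemma OR_satisfying_iff: "satisfying OR_circuit A \<longleftrightarrow> A \<in> set OR_assignments"
proof (rule satisfying_iff_listed)
  show "\<forall>C \<in> set OR_assignments. satisfying OR_circuit C"
    unfolding satisfying_circuit_iff[OF OR_circuit_def OR_edge_list]
    by (simp add: OR_assignments_def OR_simps gate_simps)
next
  fix A assume "satisfying OR_circuit A"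
  then show "\<exists>C \<in> set OR_assignments. \<forall>d \<in> darts OR_circuit. d \<in> A \<longleftrightarrow> d \<in> C"
    unfolding satisfying_circuit_iff[OF OR_circuit_def OR_edge_list]
    by (cases "(Out, 0) \<in> A"; cases "(Out, 1) \<in> A")
      (simp_all add: OR_assignments_def OR_simps gate_simps)
qed

lemma OR_simulated: "planar_parsimoniously_simulates NOR_fanout_gates OR_gate"
  by (rule planar_parsimoniously_simulates_if_listed[OF OR_wf OR_planar OR_satisfying_iff])
    (simp_all add: OR_assignments_def OR_simps OR_gate_def into_sim_eq circuit_simps insert_commute)

definition AND_edges :: "(dart \<times> dart) list" where
  "AND_edges = [
    ((Out, 0), (In 3, 0)), ((Out, 1), (In 4, 0)), ((In 3, 1), (In 0, 1)), ((In 3, 2), (In 0, 0)),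
    ((In 0, 2), (In 2, 1)), ((In 4, 1), (In 1, 1)), ((In 4, 2), (In 1, 0)),
    ((In 1, 2), (In 2, 0)), ((In 2, 2), (Out, 2))]"

definition AND_circuit :: simulation where
  "AND_circuit = circuit 5 (\<lambda>v. if v < 3 then NOR_gate else fanout_gate 2) 3 AND_edges"

lemmas AND_simps = circuit_eqD[OF AND_circuit_def] AND_edges_def

lemma AND_edge_list: "edge_list AND_circuit AND_edges"
  by (simp add: AND_simps circuit_simps set_eq_subset)

lemma AND_wf: "wf_sim NOR_fanout_gates AND_circuit"
  by (rule wf_sim_circuit[OF AND_circuit_def AND_edge_list])
    (auto simp: AND_edges_def NOR_fanout_gates_def)

lemma AND_planar: "planar AND_circuit"
proof (rule planar_if_euler[OF AND_wf])
  show "face_cycles AND_circuit [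
      [(Out, 0), (In 3, 1), (In 0, 2), (In 2, 2)],
      [(Out, 1), (In 4, 1), (In 1, 2), (In 2, 1), (In 0, 0), (In 3, 0)],
      [(Out, 2), (In 2, 0), (In 1, 0), (In 4, 0)], [(In 0, 1), (In 3, 2)], [(In 1, 1), (In 4, 2)]]"
    by (simp add: face_cycles_def) (simp add: AND_simps embedding_simps)
  show "reaches_all AND_circuit {Out} (map fst AND_edges)"
    by (simp add: AND_simps circuit_simps)
qed (simp_all add: AND_simps embedding_simps)

definition AND_assignments :: "dart set list" where
  "AND_assignments = [
    {(Out, 0), (Out, 1), (In 2, 0), (In 2, 1), (In 2, 2), (In 3, 1), (In 3, 2), (In 4, 1),
     (In 4, 2)},
    {(Out, 0), (In 1, 0), (In 1, 1), (In 1, 2), (In 2, 1), (In 2, 2), (In 3, 1), (In 3, 2),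
     (In 4, 0)},
    {(Out, 1), (In 0, 0), (In 0, 1), (In 0, 2), (In 2, 0), (In 2, 2), (In 3, 0), (In 4, 1),
     (In 4, 2)},
    {(Out, 2), (In 0, 0), (In 0, 1), (In 0, 2), (In 1, 0), (In 1, 1), (In 1, 2), (In 3, 0),
     (In 4, 0)}]"

lemma AND_satisfying_iff: "satisfying AND_circuit A \<longleftrightarrow> A \<in> set AND_assignments"
proof (rule satisfying_iff_listed)
  show "\<forall>C \<in> set AND_assignments. satisfying AND_circuit C"
    unfolding satisfying_circuit_iff[OF AND_circuit_def AND_edge_list]
    by (simp add: AND_assignments_def AND_simps gate_simps)
next
  fix A assume "satisfying AND_circuit A"
  then show "\<exists>C \<in> set AND_assignments. \<forall>d \<in> darts AND_circuit. d \<in> A \<longleftrightarrow> d \<in> C"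
    unfolding satisfying_circuit_iff[OF AND_circuit_def AND_edge_list]
    by (cases "(Out, 0) \<in> A"; cases "(Out, 1) \<in> A")
      (simp_all add: AND_assignments_def AND_simps gate_simps)
qed

lemma AND_simulated: "planar_parsimoniously_simulates NOR_fanout_gates AND_gate"
  by (rule planar_parsimoniously_simulates_if_listed[OF AND_wf AND_planar AND_satisfying_iff])
    (simp_all add: AND_assignments_def AND_simps AND_gate_def into_sim_eq circuit_simps insert_commute)

definition crossover_edges :: "(dart \<times> dart) list" where
  "crossover_edges = [
    ((Out, 0), (In 15, 0)), ((Out, 1), (In 16, 0)), ((In 15, 1), (In 9, 1)),
    ((In 15, 2), (In 8, 1)), ((In 15, 3), (In 1, 1)), ((In 15, 4), (In 0, 1)),
    ((In 16, 1), (In 0, 0)), ((In 0, 2), (In 12, 0)), ((In 12, 1), (In 1, 0)),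
    ((In 1, 2), (In 3, 1)), ((In 12, 2), (In 2, 1)), ((In 16, 2), (In 2, 0)),
    ((In 2, 2), (In 3, 0)), ((In 3, 2), (In 17, 0)), ((In 16, 3), (In 4, 0)),
    ((In 16, 4), (In 5, 0)), ((In 17, 1), (In 8, 0)), ((In 8, 2), (In 14, 0)),
    ((In 14, 1), (In 9, 0)), ((In 9, 2), (In 11, 1)), ((In 14, 2), (In 10, 1)),
    ((In 17, 2), (In 10, 0)), ((In 10, 2), (In 11, 0)), ((In 11, 2), (Out, 3)),
    ((In 17, 3), (In 6, 1)), ((In 17, 4), (In 4, 1)), ((In 4, 2), (In 13, 0)),
    ((In 13, 1), (In 6, 0)), ((In 6, 2), (In 7, 1)), ((In 13, 2), (In 5, 1)),
    ((In 5, 2), (In 7, 0)), ((In 7, 2), (Out, 2))]"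

definition crossover_circuit :: simulation where
  "crossover_circuit =
    circuit 18 (\<lambda>v. if v < 12 then NOR_gate else if v < 15 then fanout_gate 2 else fanout_gate 4) 4
      crossover_edges"

lemmas crossover_simps = circuit_eqD[OF crossover_circuit_def] crossover_edges_def

lemma crossover_edge_list: "edge_list crossover_circuit crossover_edges"
  by (simp add: crossover_simps circuit_simps set_eq_subset)

lemma crossover_wf: "wf_sim NOR_fanout_gates crossover_circuit"
  by (rule wf_sim_circuit[OF crossover_circuit_def crossover_edge_list])
    (auto simp: crossover_edges_def NOR_fanout_gates_def)

lemma crossover_planar: "planar crossover_circuit"
proof (rule planar_if_euler[OF crossover_wf])
  show "face_cycles crossover_circuit [
      [(Out, 0), (In 15, 1), (In 9, 2), (In 11, 2)],
      [(Out, 1), (In 16, 1), (In 0, 1), (In 15, 0)],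
      [(Out, 2), (In 7, 0), (In 5, 0), (In 16, 0)],
      [(Out, 3), (In 11, 0), (In 10, 0), (In 17, 3), (In 6, 2), (In 7, 2)],
      [(In 0, 0), (In 16, 2), (In 2, 1), (In 12, 0)],
      [(In 0, 2), (In 12, 1), (In 1, 1), (In 15, 4)],
      [(In 1, 0), (In 12, 2), (In 2, 2), (In 3, 1)],
      [(In 1, 2), (In 3, 2), (In 17, 1), (In 8, 1), (In 15, 3)],
      [(In 2, 0), (In 16, 3), (In 4, 1), (In 17, 0), (In 3, 0)],
      [(In 4, 0), (In 16, 4), (In 5, 1), (In 13, 0)],
      [(In 4, 2), (In 13, 1), (In 6, 1), (In 17, 4)],
      [(In 5, 2), (In 7, 1), (In 6, 0), (In 13, 2)],
      [(In 8, 0), (In 17, 2), (In 10, 1), (In 14, 0)],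
      [(In 8, 2), (In 14, 1), (In 9, 1), (In 15, 2)],
      [(In 9, 0), (In 14, 2), (In 10, 2), (In 11, 1)]]"
    by (simp add: face_cycles_def) (simp add: crossover_simps embedding_simps)
  show "reaches_all crossover_circuit {Out} (map fst crossover_edges)"
    by (simp add: crossover_simps circuit_simps)
qed (simp_all add: crossover_simps embedding_simps)

definition crossover_assignments :: "dart set list" where
  "crossover_assignments = [
    {(Out, 0), (Out, 1), (In 1, 0), (In 1, 2), (In 2, 1), (In 2, 2), (In 4, 1), (In 4, 2),
     (In 6, 1), (In 6, 2), (In 7, 0), (In 7, 2), (In 8, 0), (In 8, 2), (In 10, 0), (In 10, 2),
     (In 11, 1), (In 11, 2), (In 12, 0), (In 13, 1), (In 13, 2), (In 14, 1), (In 14, 2),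
     (In 15, 1), (In 15, 2), (In 15, 3), (In 15, 4), (In 16, 1), (In 16, 2), (In 16, 3),
     (In 16, 4), (In 17, 0)},
    {(Out, 0), (Out, 3), (In 0, 0), (In 0, 2), (In 2, 0), (In 2, 2), (In 3, 1), (In 3, 2),
     (In 4, 0), (In 4, 2), (In 5, 0), (In 5, 2), (In 7, 1), (In 7, 2), (In 9, 0), (In 9, 2),
     (In 10, 1), (In 10, 2), (In 12, 1), (In 12, 2), (In 13, 1), (In 13, 2), (In 14, 0),
     (In 15, 1), (In 15, 2), (In 15, 3), (In 15, 4), (In 16, 0), (In 17, 1), (In 17, 2),
     (In 17, 3), (In 17, 4)},
    {(Out, 1), (Out, 2), (In 0, 1), (In 0, 2), (In 1, 1), (In 1, 2), (In 3, 0), (In 3, 2),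
     (In 5, 1), (In 5, 2), (In 6, 0), (In 6, 2), (In 8, 1), (In 8, 2), (In 9, 1), (In 9, 2),
     (In 11, 0), (In 11, 2), (In 12, 1), (In 12, 2), (In 13, 0), (In 14, 1), (In 14, 2),
     (In 15, 0), (In 16, 1), (In 16, 2), (In 16, 3), (In 16, 4), (In 17, 1), (In 17, 2),
     (In 17, 3), (In 17, 4)},
    {(Out, 2), (Out, 3), (In 0, 0), (In 0, 1), (In 0, 2), (In 1, 1), (In 1, 2), (In 2, 0),
     (In 2, 2), (In 4, 0), (In 4, 1), (In 4, 2), (In 5, 0), (In 5, 2), (In 6, 1), (In 6, 2),
     (In 8, 0), (In 8, 1), (In 8, 2), (In 9, 1), (In 9, 2), (In 10, 0), (In 10, 2), (In 12, 1),
     (In 12, 2), (In 13, 1), (In 13, 2), (In 14, 1), (In 14, 2), (In 15, 0), (In 16, 0),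
     (In 17, 0)}]"

lemma crossover_satisfying_iff: "satisfying crossover_circuit A \<longleftrightarrow> A \<in> set crossover_assignments"
proof (rule satisfying_iff_listed)
  show "\<forall>C \<in> set crossover_assignments. satisfying crossover_circuit C"
    unfolding satisfying_circuit_iff[OF crossover_circuit_def crossover_edge_list]
    by (simp add: crossover_assignments_def crossover_simps gate_simps)
next
  fix A assume "satisfying crossover_circuit A"
  then show "\<exists>C \<in> set crossover_assignments. \<forall>d \<in> darts crossover_circuit. d \<in> A \<longleftrightarrow> d \<in> C"
    unfolding satisfying_circuit_iff[OF crossover_circuit_def crossover_edge_list]
    by (cases "(Out, 0) \<in> A"; cases "(Out, 1) \<in> A")
      (simp_all add: crossover_assignments_def crossover_simps gate_simps)
qed

lemma crossover_simulated: "planar_parsimoniously_simulates NOR_fanout_gates crossover"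
  by (rule planar_parsimoniously_simulates_if_listed[OF crossover_wf crossover_planar crossover_satisfying_iff])
    (simp_all add: crossover_assignments_def crossover_simps crossover_def into_sim_eq circuit_simps insert_commute)

theorem mainTheorem14:
  defines "S \<equiv> insert NOR_gate {fanout_gate k | k. k \<ge> 1}"
  shows "planar_parsimoniously_simulates S OR_gate
       \<and> planar_parsimoniously_simulates S AND_gate
       \<and> planar_parsimoniously_simulates S crossover"
  using OR_simulated AND_simulated crossover_simulated
  unfolding S_def NOR_fanout_gates_def by blast

end
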